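(* Let $G$ be a digraph and let $\alpha^{(n+1)}>\gamma^{(n)}>\beta^{(n-1)}$ be allowed elementary paths on $G$ (of lengths $n+1,n,n-1$) which all have the same starting vertex and all have the same end vertex. Write $\alpha=v_0v_1\cdots v_{n+1}$. Then either (a) there exists an allowed elementary $n$-path $\gamma'\neq\gamma$ with $\alpha>\gamma'>\beta$; or (b) $\beta$ is obtained from $\alpha$ by removing two subsequent vertices $v_i\to v_{i+1}$ with $1\le i\le n-1$.
   Context: A digraph $G=(V,E)$ consists of a set $V$ and $E\subseteq(V\times V)\setminus\{(v,v)\}$; $(u,v)\in E$ is written $u\to v$. An allowed elementary $n$-path is a sequence $v_0\cdots v_n$ of vertices with $v_{i-1}\to v_i\in E$ for $1\le i\le n$. For allowed elementary paths, $\gamma'<\gamma$ (equivalently $\gamma>\gamma'$) means $\gamma'$ is obtained from $\gamma$ by deleting some of its entries. *)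

theory Defs
  imports Main
begin

definition digraph :: "'a set \<Rightarrow> ('a \<times> 'a) set \<Rightarrow> bool" where
  "digraph V E \<longleftrightarrow> E \<subseteq> (V \<times> V) - {(v, v) | v. True}"

definition allowed_path :: "'a set \<Rightarrow> ('a \<times> 'a) set \<Rightarrow> nat \<Rightarrow> 'a list \<Rightarrow> bool" where
  "allowed_path V E n p \<longleftrightarrow> length p = n + 1 \<and> set p \<subseteq> V \<and>
     (\<forall>i. 1 \<le> i \<and> i \<le> n \<longrightarrow> (p ! (i - 1), p ! i) \<in> E)"

definition path_less :: "'a list \<Rightarrow> 'a list \<Rightarrow> bool" where
  "path_less q p \<longleftrightarrow> (\<exists>I. q = nths p I) \<and> q \<noteq> p"

end

theory Submission
  imports Defs "HOL-Library.Sublist"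
begin

(* Deleting one vertex of \<alpha> gives \<gamma> and deleting one more gives \<beta>, so \<beta> is \<alpha> with
   two positions p < q removed. As the digraph has no loops, consecutive vertices of an allowed
   path differ, so removing an end vertex would move an end point: hence 0 < p and q \<le> n.
   If q = p + 1 we are in case (b). Otherwise both \<alpha> without v_p and \<alpha> without v_q lie
   between \<beta> and \<alpha>; they are allowed paths because their only new edges v_(p-1) \<rightarrow> v_(p+1)
   and v_(q-1) \<rightarrow> v_(q+1) are already edges of \<beta>, and they differ at position p, so one of
   them is not \<gamma>. *)

definition remove_nth :: "nat \<Rightarrow> 'a list \<Rightarrow> 'a list" where
  "remove_nth i xs = take i xs @ drop (Suc i) xs"

lemma length_remove_nth [simp]: "i < length xs \<Longrightarrow> length (remove_nth i xs) = length xs - 1"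
  by (simp add: remove_nth_def)

lemma nth_remove_nth:
  "i < length xs \<Longrightarrow> k < length xs - 1 \<Longrightarrow> remove_nth i xs ! k = (if k < i then xs ! k else xs ! Suc k)"
  by (simp add: remove_nth_def nth_append min_def)

lemma set_remove_nth_subset: "set (remove_nth i xs) \<subseteq> set xs"
  unfolding remove_nth_def by (auto dest: in_set_takeD in_set_dropD)

lemma subseq_remove_nth: "subseq (remove_nth i xs) xs"
proof -
  have "subseq (drop (Suc i) xs) (drop i xs)"
    by (cases "drop i xs") (simp_all add: drop_Suc tl_drop[symmetric] list_emb_Cons)
  then have "subseq (take i xs @ drop (Suc i) xs) (take i xs @ drop i xs)"
    by (simp only: subseq_append')
  then show ?thesis
    by (simp only: remove_nth_def append_take_drop_id)
qed

lemma subseq_length_Suc_remove_nth: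
  "subseq ys xs \<Longrightarrow> length xs = Suc (length ys) \<Longrightarrow> \<exists>i<length xs. ys = remove_nth i xs"
proof (induction ys xs rule: list_emb.induct)
  case (list_emb_Nil xs)
  then show ?case by (intro exI[of _ 0]) (cases xs, simp_all add: remove_nth_def)
next
  case (list_emb_Cons ys xs x)
  then have "ys = xs" by (simp add: subseq_same_length)
  then show ?case by (intro exI[of _ 0]) (simp add: remove_nth_def)
next
  case (list_emb_Cons2 y x ys xs)
  then obtain i where "i < length xs" "ys = remove_nth i xs" by auto
  with list_emb_Cons2.hyps show ?case by (intro exI[of _ "Suc i"]) (simp add: remove_nth_def)
qed

lemma remove_nth_commute:
  "j \<le> m \<Longrightarrow> Suc m < length xs \<Longrightarrow>
   remove_nth m (remove_nth j xs) = remove_nth j (remove_nth (Suc m) xs)"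
  by (rule nth_equalityI) (simp_all add: nth_remove_nth)

lemma remove_nth_remove_Suc_nth: "remove_nth i (remove_nth (Suc i) xs) = take i xs @ drop (i + 2) xs"
  by (simp add: remove_nth_def min_def)

lemma remove_nth_twice_ordered:
  assumes "j < length xs" "m < length xs - 1"
  obtains p q where "min j m \<le> p" "p < q" "q \<le> max j (Suc m)"
    and "remove_nth m (remove_nth j xs) = remove_nth p (remove_nth q xs)"
proof (cases "m < j")
  case True
  then show ?thesis
    by (intro that[of m j]) simp_all
next
  case False
  with assms have "remove_nth m (remove_nth j xs) = remove_nth j (remove_nth (Suc m) xs)"
    by (simp add: remove_nth_commute)
  with False show ?thesis
    by (intro that[of j "Suc m"]) simp_all
qed

lemma remove_nth_neq:
  assumes "distinct_adj xs" "p < q" "q < length xs"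
  shows "remove_nth p xs \<noteq> remove_nth q xs"
proof -
  have "remove_nth p xs ! p = xs ! Suc p" "remove_nth q xs ! p = xs ! p"
    using assms(2,3) by (simp_all add: nth_remove_nth)
  moreover have "xs ! p \<noteq> xs ! Suc p"
    using assms by (simp add: distinct_adj_conv_nth)
  ultimately show ?thesis by metis
qed

lemma remove_nth_same_ends_interior:
  assumes "distinct_adj xs" "2 \<le> length xs" "i < length xs"
    and "hd (remove_nth i xs) = hd xs" "last (remove_nth i xs) = last xs"
  shows "0 < i \<and> Suc i < length xs"
proof
  show "0 < i"
  proof (rule ccontr)
    assume "\<not> 0 < i"
    then have "hd (remove_nth i xs) = xs ! 1"
      using assms(2) by (simp add: remove_nth_def hd_drop_conv_nth)
    moreover have "hd xs = xs ! 0" "xs ! 0 \<noteq> xs ! 1"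
      using assms(1,2) by (simp_all add: hd_conv_nth distinct_adj_conv_nth flip: length_greater_0_conv)
    ultimately show False
      using assms(4) by simp
  qed
  show "Suc i < length xs"
  proof (rule ccontr)
    assume "\<not> Suc i < length xs"
    with assms(3) have "i = length xs - 1" by simp
    then have "remove_nth i xs = butlast xs"
      by (simp add: remove_nth_def butlast_conv_take)
    define k where "k = length xs - 2"
    have k: "Suc k < length xs" "length xs = Suc (Suc k)"
      using assms(2) by (simp_all add: k_def)
    then have "last (butlast xs) = xs ! k" "last xs = xs ! Suc k"
      by (simp_all add: last_conv_nth nth_butlast flip: length_greater_0_conv)
    moreover have "xs ! k \<noteq> xs ! Suc k"
      using assms(1) k(1) by (simp add: distinct_adj_conv_nth)
    ultimately show False
      using assms(5) \<open>remove_nth i xs = butlast xs\<close> by simp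
  qed
qed

lemma successively_remove_nth:
  assumes "successively P xs" "0 < r" "Suc r < length xs" "P (xs ! (r - 1)) (xs ! Suc r)"
  shows "successively P (remove_nth r xs)"
proof -
  have "successively P (take r xs)"
    using assms(1) successively_append_iff[of P "take r xs" "drop r xs"] by simp
  moreover have "successively P (drop (Suc r) xs)"
    using assms(1) successively_append_iff[of P "take (Suc r) xs" "drop (Suc r) xs"] by simp
  moreover have "take r xs \<noteq> []"
    using assms(2,3) by (auto simp: take_eq_Nil)
  then have "last (take r xs) = xs ! (r - 1)"
    using assms(3) by (simp add: last_conv_nth)
  moreover have "hd (drop (Suc r) xs) = xs ! Suc r"
    using assms(3) by (simp add: hd_drop_conv_nth)
  ultimately show ?thesis
    using assms(4) by (simp add: remove_nth_def successively_append_iff)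
qed

lemma successively_remove_nthD:
  assumes "successively P (remove_nth s xs)" "Suc k < length xs" "s \<noteq> k" "s \<noteq> Suc k"
  shows "P (xs ! k) (xs ! Suc k)"
proof -
  consider "s < k" | "Suc k < s" "s < length xs" | "length xs \<le> s"
    using assms(3,4) by linarith
  then show ?thesis
  proof cases
    case 1
    define i where "i = k - 1"
    with 1 have "k = Suc i" "s \<le> i" by simp_all
    with assms(1,2) show ?thesis
      using successively_nth[of P "remove_nth s xs" i] by (simp add: nth_remove_nth)
  next
    case 2
    with assms(1,2) show ?thesis
      using successively_nth[of P "remove_nth s xs" k] by (simp add: nth_remove_nth)
  next
    case 3
    then have "remove_nth s xs = xs" by (simp add: remove_nth_def)
    with assms(1,2) show ?thesis by (simp add: successively_nth)
  qed
qed

lemma successively_remove_nth_if_further_removal: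
  assumes "successively P xs" "successively P (remove_nth s (remove_nth r xs))"
    and "0 < r" "Suc r < length xs" "s \<noteq> r - 1" "s \<noteq> r"
  shows "successively P (remove_nth r xs)"
proof (rule successively_remove_nth[OF assms(1,3,4)])
  have "P (remove_nth r xs ! (r - 1)) (remove_nth r xs ! Suc (r - 1))"
    using assms(2-6) by (intro successively_remove_nthD[of P s]) auto
  with assms(3,4) show "P (xs ! (r - 1)) (xs ! Suc r)"
    by (simp add: nth_remove_nth)
qed

lemma path_less_iff_subseq: "path_less ys xs \<longleftrightarrow> subseq ys xs \<and> ys \<noteq> xs"
  by (simp add: path_less_def subseq_conv_nths)

lemma path_less_remove_nth: "i < length xs \<Longrightarrow> path_less (remove_nth i xs) xs"
  by (auto simp: path_less_iff_subseq subseq_remove_nth dest: arg_cong[of _ _ length])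

lemma path_less_length_Suc_remove_nth:
  assumes "path_less ys xs" "length xs = Suc (length ys)"
  obtains i where "i < length xs" "ys = remove_nth i xs"
  using assms subseq_length_Suc_remove_nth by (meson path_less_iff_subseq)

abbreviation walk :: "('a \<times> 'a) set \<Rightarrow> 'a list \<Rightarrow> bool" where
  "walk E \<equiv> successively (\<lambda>x y. (x, y) \<in> E)"

lemma allowed_path_iff:
  "allowed_path V E n p \<longleftrightarrow> length p = Suc n \<and> set p \<subseteq> V \<and> walk E p"
proof -
  have "(\<forall>i. 1 \<le> i \<and> i \<le> n \<longrightarrow> (p ! (i - 1), p ! i) \<in> E) \<longleftrightarrow>
        (\<forall>i<n. (p ! i, p ! Suc i) \<in> E)"
  proof safe
    fix i assume "\<forall>i. 1 \<le> i \<and> i \<le> n \<longrightarrow> (p ! (i - 1), p ! i) \<in> E" "i < n"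
    then show "(p ! i, p ! Suc i) \<in> E" by (auto dest: spec[of _ "Suc i"])
  next
    fix i assume walk: "\<forall>i<n. (p ! i, p ! Suc i) \<in> E" and "1 \<le> i" "i \<le> n"
    then have "i - 1 < n" by simp
    with walk have "(p ! (i - 1), p ! Suc (i - 1)) \<in> E" by blast
    with \<open>1 \<le> i\<close> show "(p ! (i - 1), p ! i) \<in> E" by simp
  qed
  then show ?thesis
    unfolding allowed_path_def successively_conv_nth by auto
qed

lemma digraph_walk_distinct_adj: "digraph V E \<Longrightarrow> walk E xs \<Longrightarrow> distinct_adj xs"
  unfolding digraph_def distinct_adj_def by (erule successively_mono) blast

lemma allowed_path_remove_nth:
  assumes "allowed_path V E (Suc n) xs" "walk E (remove_nth s (remove_nth r xs))"
    and "0 < r" "Suc r < length xs" "s \<noteq> r - 1" "s \<noteq> r"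
  shows "allowed_path V E n (remove_nth r xs)"
  using assms successively_remove_nth_if_further_removal[of _ xs s r] set_remove_nth_subset[of r xs]
  by (auto simp: allowed_path_iff)

lemma path_less_same_ends_remove_interior:
  assumes "digraph V E" "allowed_path V E k xs" "allowed_path V E (k - 1) ys" "0 < k"
    and "path_less ys xs" "hd xs = hd ys" "last xs = last ys"
  obtains i where "0 < i" "i < k" "ys = remove_nth i xs"
proof -
  have len: "length xs = Suc k" "length xs = Suc (length ys)"
    using assms(2-4) by (simp_all add: allowed_path_iff)
  obtain i where i: "i < length xs" "ys = remove_nth i xs"
    using assms(5) len(2) by (rule path_less_length_Suc_remove_nth)
  have "distinct_adj xs"
    using assms(1,2) by (simp add: allowed_path_iff digraph_walk_distinct_adj)
  then have "0 < i \<and> Suc i < length xs"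
    using i(1) len(1) assms(4,6,7) unfolding i(2) by (intro remove_nth_same_ends_interior) simp_all
  with i len(1) show ?thesis
    by (intro that) simp_all
qed

lemma other_intermediate_path:
  assumes "digraph V E" "allowed_path V E (Suc n) xs" "walk E ys"
    and "ys = remove_nth p (remove_nth q xs)" "0 < p" "Suc p < q" "q \<le> n"
  shows "\<exists>zs'. allowed_path V E n zs' \<and> zs' \<noteq> zs \<and> path_less zs' xs \<and> path_less ys zs'"
proof -
  have len: "length xs = Suc (Suc n)"
    using assms(2) by (simp add: allowed_path_iff)
  have ys_p: "ys = remove_nth (q - 1) (remove_nth p xs)"
    using assms(4-7) len remove_nth_commute[of p "q - 1" xs] by simp
  have "allowed_path V E n (remove_nth p xs)"
    using assms(2,3,5-7) len unfolding ys_p by (intro allowed_path_remove_nth) auto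
  moreover have "allowed_path V E n (remove_nth q xs)"
    using assms(2-7) len by (intro allowed_path_remove_nth) auto
  moreover have "path_less ys (remove_nth p xs)"
    unfolding ys_p using assms(5-7) len by (simp add: path_less_remove_nth)
  moreover have "path_less ys (remove_nth q xs)"
    unfolding assms(4) using assms(5-7) len by (simp add: path_less_remove_nth)
  moreover have "path_less (remove_nth p xs) xs" "path_less (remove_nth q xs) xs"
    using assms(5-7) len by (simp_all add: path_less_remove_nth)
  moreover have "remove_nth p xs \<noteq> remove_nth q xs"
    using assms(1,2,5-7) len by (simp add: remove_nth_neq digraph_walk_distinct_adj allowed_path_iff)
  ultimately show ?thesis by metis
qed

theorem lemma2p1:
  fixes V :: "'a set" and E :: "('a \<times> 'a) set" and n :: nat
    and \<alpha> \<gamma> \<beta> :: "'a list"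
  assumes G: "digraph V E"
    and n1: "n \<ge> 1"
    and a: "allowed_path V E (n + 1) \<alpha>"
    and g: "allowed_path V E n \<gamma>"
    and b: "allowed_path V E (n - 1) \<beta>"
    and ag: "path_less \<gamma> \<alpha>"
    and gb: "path_less \<beta> \<gamma>"
    and hd: "hd \<alpha> = hd \<gamma>" "hd \<gamma> = hd \<beta>"
    and lst: "last \<alpha> = last \<gamma>" "last \<gamma> = last \<beta>"
  shows "(\<exists>\<gamma>'. allowed_path V E n \<gamma>' \<and> \<gamma>' \<noteq> \<gamma> \<and> path_less \<gamma>' \<alpha> \<and> path_less \<beta> \<gamma>')
       \<or> (\<exists>i. 1 \<le> i \<and> i \<le> n - 1 \<and> \<beta> = take i \<alpha> @ drop (i + 2) \<alpha>)"
proof -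
  obtain j where j: "0 < j" "j < n + 1" "\<gamma> = remove_nth j \<alpha>"
    using G a _ _ ag hd(1) lst(1) by (rule path_less_same_ends_remove_interior) (use g in simp_all)
  obtain m where m: "0 < m" "m < n" "\<beta> = remove_nth m \<gamma>"
    using G g b _ gb hd(2) lst(2) by (rule path_less_same_ends_remove_interior) (use n1 in simp)
  have "j < length \<alpha>" "m < length \<alpha> - 1"
    using a j m by (simp_all add: allowed_path_iff)
  then obtain p q where "min j m \<le> p" "p < q" "q \<le> max j (Suc m)"
    and "remove_nth m (remove_nth j \<alpha>) = remove_nth p (remove_nth q \<alpha>)"
    by (rule remove_nth_twice_ordered)
  with j m have pq: "0 < p" "p < q" "q \<le> n" and \<beta>_pq: "\<beta> = remove_nth p (remove_nth q \<alpha>)"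
    by auto
  show ?thesis
  proof (cases "q = Suc p")
    case True
    with pq \<beta>_pq show ?thesis
      by (intro disjI2 exI[of _ p]) (simp add: remove_nth_remove_Suc_nth)
  next
    case False
    with pq have "Suc p < q" by simp
    with G a b pq \<beta>_pq show ?thesis
      by (intro disjI1 other_intermediate_path) (simp_all add: allowed_path_iff)
  qed
qed

end
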